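(* There is an absolute constant $c_0>0$ such that the following holds. Let $\mathcal D$ be a distribution on $\mathbb R^d\times\{\pm1\}$ whose $x$-marginal is $(3,L,R,\beta)$-well-behaved, let $w\in\mathbb R^d$ be a unit vector, $\rho\in(0,1]$, and $B=\{x:\langle x,w\rangle\in[\rho R/2,\rho R/\sqrt2]\}$. Let $v\in w^\perp$ and $t_1,t_2>0$ be such that $$\mathbb E_{(z,y)\sim\mathcal D_B^{\pi_w}}\big[\mathbf 1\{-t_1\le\langle v,z\rangle\le-t_2\}\,y\big]<-C'$$ for some $C'>0$. Define $T_w(x)=\frac{1}{\langle w,x\rangle}\mathbf 1\{x\in B,\ -t_1\le\langle v,\pi_w(x)\rangle\le-t_2\}$ (and $T_w(x)=0$ for $x\notin B$). Then $\mathbb E_{(x,y)\sim\mathcal D}[T_w(x)\,y\,\langle w,x\rangle]\le-c_0\,C'\,L\,R^3\rho$.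
   Context: For a unit vector $w$ and $x$ with $\langle w,x\rangle\ne0$, the perspective projection is $\pi_w(x)=\mathrm{proj}_{w^\perp}\big(x/\langle w,x\rangle\big)$, where $\mathrm{proj}_{w^\perp}$ is orthogonal projection onto $w^\perp=\{u:\langle u,w\rangle=0\}$. For a set $B$ and a map $q$, $\mathcal D_B$ is $\mathcal D$ conditioned on $x\in B$, and $\mathcal D_B^{q}$ is the distribution of $(q(x),y)$ for $(x,y)\sim\mathcal D_B$. For $k\in\mathbb Z_+$, $L,R>0$, $\beta\ge1$, a distribution $\mathcal D_x$ on $\mathbb R^d$ is $(k,L,R,\beta)$-well-behaved if (i) for every $k$-dimensional subspace $V$ the projection of $\mathcal D_x$ onto $V$ has a density $\gamma_V$ on $V$ with $\gamma_V(x)\ge L$ for all $x\in V$, $\|x\|_2\le R$; and (ii) for every unit vector $w$ and every $t>0$, $\Pr_{x\sim\mathcal D_x}[|\langle w,x\rangle|\ge t]\le\exp(1-t/\beta)$. *)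

theory Defs
  imports "HOL-Probability.Probability"
begin

text \<open>Points of R^d are represented as functions nat => real vanishing from index d on,
  so that the dimension d can be quantified inside the formula (the constant c0 is absolute).\<close>

definition Rd :: "nat \<Rightarrow> (nat \<Rightarrow> real) set" where
  "Rd d = {x. \<forall>i\<ge>d. x i = 0}"

definition inner_d :: "nat \<Rightarrow> (nat \<Rightarrow> real) \<Rightarrow> (nat \<Rightarrow> real) \<Rightarrow> real" where
  "inner_d d u x = (\<Sum>i<d. u i * x i)"

definition proj_perp :: "nat \<Rightarrow> (nat \<Rightarrow> real) \<Rightarrow> (nat \<Rightarrow> real) \<Rightarrow> (nat \<Rightarrow> real)" where
  "proj_perp d w u = (\<lambda>i. u i - inner_d d u w * w i)"

definition persp :: "nat \<Rightarrow> (nat \<Rightarrow> real) \<Rightarrow> (nat \<Rightarrow> real) \<Rightarrow> (nat \<Rightarrow> real)" where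
  "persp d w x = proj_perp d w (\<lambda>i. x i / inner_d d w x)"

text \<open>A k-dimensional subspace V is described by an orthonormal basis u;
  the projection onto V is identified with R^k via the coordinates w.r.t. u
  (a linear isometry), and Lebesgue measure on V with lborel on real^'k.\<close>
definition well_behaved :: "'k::finite itself \<Rightarrow> nat \<Rightarrow> (nat \<Rightarrow> real) measure \<Rightarrow> real \<Rightarrow> real \<Rightarrow> real \<Rightarrow> bool" where
  "well_behaved _ d Dx L R \<beta> \<longleftrightarrow>
     (\<forall>u :: 'k \<Rightarrow> (nat \<Rightarrow> real).
        (\<forall>i. u i \<in> Rd d) \<and> (\<forall>i j. inner_d d (u i) (u j) = (if i = j then 1 else 0)) \<longrightarrow>
        (\<exists>\<gamma> :: real^'k \<Rightarrow> real.
           \<gamma> \<in> borel_measurable borel \<and> (\<forall>z. 0 \<le> \<gamma> z) \<and>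
           distr Dx lborel (\<lambda>x. \<chi> i. inner_d d (u i) x) = density lborel (\<lambda>z. ennreal (\<gamma> z)) \<and>
           (\<forall>z. norm z \<le> R \<longrightarrow> L \<le> \<gamma> z))) \<and>
     (\<forall>w \<in> Rd d. inner_d d w w = 1 \<longrightarrow>
        (\<forall>t>0. measure Dx {x. \<bar>inner_d d w x\<bar> \<ge> t} \<le> exp (1 - t / \<beta>)))"

definition cond_meas :: "'a measure \<Rightarrow> 'a set \<Rightarrow> 'a measure" where
  "cond_meas M A = density M (\<lambda>p. ennreal (indicator A p / measure M A))"

definition cond_push :: "((nat \<Rightarrow> real) \<times> real) measure \<Rightarrow> (nat \<Rightarrow> real) set
     \<Rightarrow> ((nat \<Rightarrow> real) \<Rightarrow> (nat \<Rightarrow> real)) \<Rightarrow> ((nat \<Rightarrow> real) \<times> real) measure" where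
  "cond_push M B q = distr (cond_meas M {p. fst p \<in> B}) borel (\<lambda>p. (q (fst p), snd p))"

end

theory Submission
  imports Defs
begin

text \<open>On the slab \<open>B\<close> one has \<open>\<langle>w,x\<rangle> \<ge> \<rho>R/2 > 0\<close>, so \<open>T\<^sub>w(x) y \<langle>w,x\<rangle> = 1\<^sub>B(x) 1\<^sub>S(\<pi>\<^sub>w x) y\<close>
  and its expectation is \<open>Pr[B]\<close> times the conditional correlation, hence below \<open>-C' Pr[B]\<close>.
  To bound \<open>Pr[B]\<close> from below, complete \<open>w\<close> to an orthonormal triple (by a Householder
  reflection of the standard basis): in these coordinates the density is at least \<open>L\<close> on the ball
  of radius \<open>R\<close>, which contains the box \<open>[\<rho>R/2, \<rho>R/\<surd>2] \<times> [-R/2, R/2]\<^sup>2\<close> of volume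
  at least \<open>\<rho>R\<^sup>3/5\<close>, and that box lies inside \<open>B\<close>. Hence \<open>c\<^sub>0 = 1/5\<close>.\<close>

lemma inner_d_commute: "inner_d d u x = inner_d d x u"
  unfolding inner_d_def by (simp add: mult.commute)

lemma inner_d_diff_mult_left:
  "inner_d d (\<lambda>i. a i - c * b i) x = inner_d d a x - c * inner_d d b x"
  unfolding inner_d_def by (simp add: algebra_simps sum_subtractf sum_distrib_left)

lemma inner_d_diff_mult_right:
  "inner_d d x (\<lambda>i. a i - c * b i) = inner_d d x a - c * inner_d d x b"
  unfolding inner_d_def by (simp add: algebra_simps sum_subtractf sum_distrib_left)

lemma continuous_on_inner_d: "continuous_on UNIV (inner_d d u)"
  unfolding inner_d_def by (intro continuous_intros continuous_on_product_coordinates)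

lemma borel_measurable_inner_d [measurable]:
  "(\<lambda>x. inner_d d u x) \<in> borel_measurable borel"
  "(\<lambda>x. inner_d d x u) \<in> borel_measurable borel"
  using continuous_on_inner_d[THEN borel_measurable_continuous_onI]
  by (simp_all add: inner_d_commute[of d _ u])

lemma persp_apply: "persp d w x i = x i / inner_d d w x - inner_d d x w / inner_d d w x * w i"
  unfolding persp_def proj_perp_def inner_d_def by (simp add: sum_divide_distrib)

lemma borel_measurable_persp [measurable]: "persp d w \<in> borel_measurable borel"
  by (rule measurable_coordinatewise_then_product) (simp add: persp_apply)

lemma borel_measurable_fst [measurable]:
  "(fst :: 'a::topological_space \<times> 'b::topological_space \<Rightarrow> 'a) \<in> borel_measurable borel"
  by (intro borel_measurable_continuous_onI continuous_intros)

lemma borel_measurable_snd [measurable]: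
  "(snd :: 'a::topological_space \<times> 'b::topological_space \<Rightarrow> 'b) \<in> borel_measurable borel"
  by (intro borel_measurable_continuous_onI continuous_intros)

definition unit_vec :: "nat \<Rightarrow> nat \<Rightarrow> real" where
  "unit_vec k = (\<lambda>i. if i = k then 1 else 0)"

lemma inner_d_unit_vec: "k < d \<Longrightarrow> inner_d d (unit_vec k) x = x k"
  unfolding inner_d_def unit_vec_def by (simp add: if_distrib[of "\<lambda>c. c * _"] cong: if_cong)

definition reflect :: "nat \<Rightarrow> (nat \<Rightarrow> real) \<Rightarrow> (nat \<Rightarrow> real) \<Rightarrow> nat \<Rightarrow> real" where
  "reflect d h x = (\<lambda>i. x i - (2 * inner_d d h x / inner_d d h h) * h i)"

text \<open>For \<open>h = 0\<close> the coefficient is a division by zero and \<open>reflect d h\<close> is the identity,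
  so the reflection is an isometry without any hypothesis on \<open>h\<close>.\<close>
lemma inner_d_reflect: "inner_d d (reflect d h x) (reflect d h y) = inner_d d x y"
proof -
  define n where "n = inner_d d h h"
  have "inner_d d (reflect d h x) (reflect d h y) =
      inner_d d x y - (2 * inner_d d h y / n) * inner_d d h x
        - (2 * inner_d d h x / n) * inner_d d h y
        + (2 * inner_d d h x / n) * (2 * inner_d d h y / n) * n"
    unfolding reflect_def n_def[symmetric] inner_d_diff_mult_left inner_d_diff_mult_right
    by (simp add: inner_d_commute[of d _ h] algebra_simps)
  also have "\<dots> = inner_d d x y"
    by (cases "n = 0") (simp_all add: field_simps)
  finally show ?thesis .
qed

lemma reflect_Rd: "h \<in> Rd d \<Longrightarrow> x \<in> Rd d \<Longrightarrow> reflect d h x \<in> Rd d"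
  unfolding Rd_def reflect_def by simp

lemma reflect_unit_vec_0_eq:
  assumes w: "w \<in> Rd d" "inner_d d w w = 1" and d: "0 < d"
  shows "reflect d (\<lambda>i. unit_vec 0 i - w i) (unit_vec 0) = w"
proof -
  define h where "h = (\<lambda>i. unit_vec 0 i - w i)"
  have uh: "inner_d d (unit_vec 0) h = 1 - w 0"
    unfolding inner_d_unit_vec[OF d] by (simp add: h_def unit_vec_def)
  have "inner_d d w h = inner_d d w (unit_vec 0) - inner_d d w w"
    using inner_d_diff_mult_right[of d w "unit_vec 0" 1 w] by (simp add: h_def)
  also have "\<dots> = w 0 - 1"
    using inner_d_unit_vec[OF d, of w] w(2) by (simp add: inner_d_commute)
  finally have "inner_d d h h = 2 * (1 - w 0)"
    using inner_d_diff_mult_left[of d "unit_vec 0" 1 w h] uh by (simp add: h_def[symmetric])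
  moreover have "inner_d d h (unit_vec 0) = 1 - w 0"
    using uh by (simp add: inner_d_commute)
  ultimately have "reflect d h (unit_vec 0) = (if w 0 = 1 then unit_vec 0 else (\<lambda>i. unit_vec 0 i - h i))"
    unfolding reflect_def by (auto simp: fun_eq_iff)
  moreover have "unit_vec 0 = w" if "w 0 = 1"
  proof -
    have "(\<Sum>i<d. h i * h i) = 0"
      using \<open>inner_d d h h = 2 * (1 - w 0)\<close> that by (simp add: inner_d_def)
    then have "h i = 0" if "i < d" for i
      using that by (subst (asm) sum_nonneg_eq_0_iff) auto
    moreover have "h i = 0" if "\<not> i < d" for i
      using w d that unfolding h_def Rd_def unit_vec_def by auto
    ultimately show ?thesis
      unfolding h_def by (auto simp: fun_eq_iff)
  qed
  ultimately show ?thesis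
    unfolding h_def by auto
qed

lemma unit_vec_Rd: "k < d \<Longrightarrow> unit_vec k \<in> Rd d"
  unfolding Rd_def unit_vec_def by simp

lemma orthonormal_frame_containing:
  fixes f :: "'k \<Rightarrow> nat"
  assumes f: "inj f" "\<And>k. f k < d" "f k0 = 0"
    and w: "w \<in> Rd d" "inner_d d w w = 1"
  obtains u :: "'k \<Rightarrow> nat \<Rightarrow> real"
  where "\<And>k. u k \<in> Rd d" "\<And>j k. inner_d d (u j) (u k) = (if j = k then 1 else 0)" "u k0 = w"
proof
  define h where "h = (\<lambda>i. unit_vec 0 i - w i)"
  have h: "h \<in> Rd d"
    using w f(2)[of k0] unfolding h_def Rd_def unit_vec_def by (simp add: f(3))
  show "reflect d h (unit_vec (f k)) \<in> Rd d" for k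
    using reflect_Rd[OF h unit_vec_Rd[OF f(2)]] .
  show "inner_d d (reflect d h (unit_vec (f j))) (reflect d h (unit_vec (f k))) = (if j = k then 1 else 0)" for j k
    using f(2) injD[OF f(1)] by (simp add: inner_d_reflect inner_d_unit_vec) (auto simp: unit_vec_def)
  show "reflect d h (unit_vec (f k0)) = w"
    using reflect_unit_vec_0_eq[OF w] f(2)[of k0] unfolding h_def f(3) by simp
qed

lemma inj_nat_Rep_bit1: "inj (\<lambda>k::'a::finite bit1. nat (Rep_bit1 k))"
proof (rule inj_onI)
  fix j k :: "'a bit1"
  assume "nat (Rep_bit1 j) = nat (Rep_bit1 k)"
  moreover have "0 \<le> Rep_bit1 j" "0 \<le> Rep_bit1 k"
    using Rep_bit1[of j] Rep_bit1[of k] by simp_all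
  ultimately show "j = k"
    by (simp add: bit1.Rep_inject_sym)
qed

lemma nat_Rep_bit1_less: "nat (Rep_bit1 (k::'a::finite bit1)) < CARD('a bit1)"
  using bit1.Rep_less_n[of k] Rep_bit1[of k] by (simp add: nat_less_iff)

lemma nat_Rep_bit1_0: "nat (Rep_bit1 0) = 0"
  by (simp add: bit1.Rep_0)

lemma emeasure_vimage_ge_of_density_ge:
  fixes co :: "'a \<Rightarrow> 'b::euclidean_space"
  assumes co: "co \<in> measurable Dx lborel"
    and dens: "distr Dx lborel co = density lborel (\<lambda>z. ennreal (\<gamma> z))"
    and \<gamma>: "\<gamma> \<in> borel_measurable borel"
    and K: "K \<in> sets lborel" "emeasure lborel K < \<infinity>"
    and L: "0 \<le> L" "\<And>z. z \<in> K \<Longrightarrow> L \<le> \<gamma> z"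
  shows "ennreal (L * measure lborel K) \<le> emeasure Dx (co -` K \<inter> space Dx)"
proof -
  have "ennreal (L * measure lborel K) = (\<integral>\<^sup>+z. ennreal L * indicator K z \<partial>lborel)"
    using K L(1) by (simp add: nn_integral_cmult_indicator emeasure_eq_ennreal_measure ennreal_mult)
  also have "\<dots> \<le> (\<integral>\<^sup>+z. ennreal (\<gamma> z) * indicator K z \<partial>lborel)"
    using L(2) by (intro nn_integral_mono) (auto split: split_indicator intro!: ennreal_leI)
  also have "\<dots> = emeasure (distr Dx lborel co) K"
    using \<gamma> K by (simp add: dens emeasure_density)
  also have "\<dots> = emeasure Dx (co -` K \<inter> space Dx)"
    using co K by (simp add: emeasure_distr)
  finally show ?thesis .
qed

definition slab_box :: "real \<Rightarrow> real \<Rightarrow> (real^3) set" where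
  "slab_box \<rho> R =
     cbox (\<chi> i. if i = 0 then \<rho> * R / 2 else - R / 2) (\<chi> i. if i = 0 then \<rho> * R / sqrt 2 else R / 2)"

lemma sqrt_2_bounds: "7/5 \<le> sqrt 2" "sqrt 2 \<le> 10/7"
  by (rule real_le_rsqrt, simp add: power_divide) (rule real_le_lsqrt, simp_all add: power_divide)

lemma UNIV_3_zero_based: "(UNIV :: 3 set) = {0, 1, 2}"
proof -
  have "(3::3) = 0" by simp
  then show ?thesis using UNIV_3 by auto
qed

lemma prod_UNIV_3_zero_based: "prod f (UNIV :: 3 set) = f 0 * f 1 * f 2"
  unfolding UNIV_3_zero_based by (simp add: mult.assoc)

lemma forall_3_zero_based: "(\<forall>i::3. P i) \<longleftrightarrow> P 0 \<and> P 1 \<and> P 2"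
  using ball_UNIV[of P] unfolding UNIV_3_zero_based by simp

lemma mem_slab_box:
  "z \<in> slab_box \<rho> R \<longleftrightarrow> \<rho> * R / 2 \<le> z$0 \<and> z$0 \<le> \<rho> * R / sqrt 2 \<and>
     \<bar>z$1\<bar> \<le> R / 2 \<and> \<bar>z$2\<bar> \<le> R / 2"
  unfolding slab_box_def mem_box_cart forall_3_zero_based by auto

lemma norm_le_of_mem_slab_box:
  assumes "z \<in> slab_box \<rho> R" "0 \<le> \<rho>" "\<rho> \<le> 1" "0 \<le> R"
  shows "norm z \<le> R"
proof -
  have z: "\<rho> * R / 2 \<le> z$0" "z$0 \<le> \<rho> * R / sqrt 2" "\<bar>z$1\<bar> \<le> R / 2" "\<bar>z$2\<bar> \<le> R / 2"
    using assms(1) unfolding mem_slab_box by auto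
  have "0 \<le> \<rho> * R / 2"
    using assms(2,4) by simp
  moreover have "\<rho> * R / sqrt 2 \<le> R / sqrt 2"
    using assms(2-4) by (intro divide_right_mono) (simp_all add: mult_left_le_one_le)
  ultimately have "(z$0)\<^sup>2 \<le> (R / sqrt 2)\<^sup>2"
    using z(1,2) by (intro power_mono) auto
  moreover have "\<bar>z$1\<bar>\<^sup>2 \<le> (R / 2)\<^sup>2" "\<bar>z$2\<bar>\<^sup>2 \<le> (R / 2)\<^sup>2"
    using z(3,4) by (intro power_mono; simp)+
  ultimately have "(z$0)\<^sup>2 + (z$1)\<^sup>2 + (z$2)\<^sup>2 \<le> R\<^sup>2"
    by (simp add: power_divide)
  moreover have "norm z = sqrt ((z$0)\<^sup>2 + (z$1)\<^sup>2 + (z$2)\<^sup>2)"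
    unfolding norm_vec_def L2_set_def UNIV_3_zero_based by (simp add: add.commute)
  ultimately show ?thesis
    using assms(4) real_sqrt_le_mono by fastforce
qed

lemma measure_slab_box:
  assumes "0 \<le> \<rho>" "0 \<le> R"
  shows "\<rho> * R ^ 3 / 5 \<le> measure lborel (slab_box \<rho> R)"
proof -
  have "\<rho> * R / 2 \<le> \<rho> * R / sqrt 2"
    using assms sqrt_2_bounds by (intro divide_left_mono) auto
  then have "(\<chi> i. if i = 0 then \<rho> * R / 2 else 0) \<in> slab_box \<rho> R"
    using assms by (simp add: mem_slab_box)
  then have "slab_box \<rho> R \<noteq> {}"
    by blast
  then have "measure lborel (slab_box \<rho> R)
      = (\<rho> * R / sqrt 2 - \<rho> * R / 2) * (R / 2 - - R / 2) * (R / 2 - - R / 2)"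
    unfolding slab_box_def by (subst content_cbox_cart) (simp_all add: prod_UNIV_3_zero_based)
  moreover have "1 / 5 \<le> 1 / sqrt 2 - 1 / 2"
    using sqrt_2_bounds by (simp add: field_simps)
  then have "\<rho> * R ^ 3 * (1 / 5) \<le> \<rho> * R ^ 3 * (1 / sqrt 2 - 1 / 2)"
    using assms by (intro mult_left_mono) auto
  ultimately show ?thesis
    by (simp add: algebra_simps power3_eq_cube)
qed

lemma measure_slab_ge:
  assumes wb: "well_behaved TYPE(3) d Dx L R \<beta>" and Dx: "finite_measure Dx" "sets Dx = sets borel"
    and d: "3 \<le> d" and w: "w \<in> Rd d" "inner_d d w w = 1"
    and L: "0 < L" and R: "0 < R" and \<rho>: "0 < \<rho>" "\<rho> \<le> 1"
  shows "L * R ^ 3 * \<rho> / 5 \<le> measure Dx {x. \<rho> * R / 2 \<le> inner_d d x w \<and> inner_d d x w \<le> \<rho> * R / sqrt 2}"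
    (is "_ \<le> measure Dx ?B")
proof -
  have "nat (Rep_bit1 k) < d" for k :: 3
    using nat_Rep_bit1_less[of k] d by simp
  then obtain u :: "3 \<Rightarrow> nat \<Rightarrow> real"
    where u: "\<And>k. u k \<in> Rd d" "\<And>j k. inner_d d (u j) (u k) = (if j = k then 1 else 0)"
      and u0: "u 0 = w"
    using orthonormal_frame_containing[OF inj_nat_Rep_bit1 _ nat_Rep_bit1_0 w] by blast
  define co where "co x = (\<chi> k. inner_d d (u k) x)" for x
  obtain \<gamma> :: "real^3 \<Rightarrow> real"
    where \<gamma>: "\<gamma> \<in> borel_measurable borel"
      and dens: "distr Dx lborel co = density lborel (\<lambda>z. ennreal (\<gamma> z))"
      and \<gamma>_ge: "\<And>z. norm z \<le> R \<Longrightarrow> L \<le> \<gamma> z"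
    using wb u unfolding well_behaved_def co_def by blast
  have "co \<in> borel_measurable borel"
    unfolding co_def by (intro borel_measurable_continuous_onI continuous_on_vec_lambda continuous_on_inner_d)
  then have co: "co \<in> measurable Dx lborel"
    using measurable_cong_sets[OF Dx(2) sets_lborel] by blast
  have K: "slab_box \<rho> R \<in> sets lborel" "emeasure lborel (slab_box \<rho> R) < \<infinity>"
    unfolding slab_box_def by (simp, rule emeasure_lborel_cbox_finite)
  have "L \<le> \<gamma> z" if "z \<in> slab_box \<rho> R" for z
    using that \<rho> R by (intro \<gamma>_ge norm_le_of_mem_slab_box) auto
  then have "ennreal (L * measure lborel (slab_box \<rho> R)) \<le> emeasure Dx (co -` slab_box \<rho> R \<inter> space Dx)"
    using L by (intro emeasure_vimage_ge_of_density_ge[OF co dens \<gamma> K]) auto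
  also have "\<dots> \<le> emeasure Dx ?B"
  proof (rule emeasure_mono)
    show "co -` slab_box \<rho> R \<inter> space Dx \<subseteq> ?B"
      by (auto simp: co_def mem_slab_box u0 inner_d_commute[of d w])
  qed (simp add: Dx(2))
  finally have "L * measure lborel (slab_box \<rho> R) \<le> measure Dx ?B"
    by (simp add: finite_measure.emeasure_eq_measure[OF Dx(1)])
  moreover have "L * (\<rho> * R ^ 3 / 5) \<le> L * measure lborel (slab_box \<rho> R)"
    using measure_slab_box[of \<rho> R] L R \<rho> by (intro mult_left_mono) auto
  ultimately show ?thesis
    by (simp add: algebra_simps)
qed

lemma integral_cond_meas:
  fixes f :: "'a \<Rightarrow> real"
  assumes A: "A \<in> sets M" and f: "f \<in> borel_measurable M"
  shows "(\<integral>x. f x \<partial>cond_meas M A) = (\<integral>x. indicator A x * f x \<partial>M) / measure M A"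
proof -
  have "(\<lambda>x. indicator A x / measure M A) \<in> borel_measurable M"
    using A by measurable
  then have "(\<integral>x. f x \<partial>cond_meas M A) = (\<integral>x. indicator A x / measure M A * f x \<partial>M)"
    unfolding cond_meas_def using f by (subst integral_density) simp_all
  also have "\<dots> = (\<integral>x. indicator A x * f x \<partial>M) / measure M A"
    by (subst integral_divide_zero[symmetric]) simp
  finally show ?thesis .
qed

lemma integral_cond_push:
  fixes f :: "(nat \<Rightarrow> real) \<times> real \<Rightarrow> real"
  assumes M: "sets M = sets borel" and B: "B \<in> sets borel"
    and q: "q \<in> borel_measurable borel" and f: "f \<in> borel_measurable borel"
  shows "(\<integral>p. f p \<partial>cond_push M B q)
    = (\<integral>p. indicator B (fst p) * f (q (fst p), snd p) \<partial>M) / measure M {p. fst p \<in> B}"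
proof -
  define A where "A = {p::(nat \<Rightarrow> real) \<times> real. fst p \<in> B}"
  have A_sets: "A \<in> sets M"
    using measurable_sets[OF borel_measurable_fst B] unfolding M A_def by (simp add: vimage_def)
  have sets_cond: "sets (cond_meas M A) = sets borel"
    using M by (simp add: cond_meas_def)
  have qp: "(\<lambda>p::(nat \<Rightarrow> real) \<times> real. (q (fst p), snd p)) \<in> borel_measurable borel"
    by (intro borel_measurable_Pair measurable_compose[OF borel_measurable_fst q] borel_measurable_snd)
  then have "(\<lambda>p. (q (fst p), snd p)) \<in> measurable (cond_meas M A) borel"
    by (subst measurable_cong_sets[OF sets_cond refl])
  then have "(\<integral>p. f p \<partial>cond_push M B q) = (\<integral>p. f (q (fst p), snd p) \<partial>cond_meas M A)"
    unfolding cond_push_def A_def[symmetric] using f by (rule integral_distr)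
  also have "\<dots> = (\<integral>p. indicator A p * f (q (fst p), snd p) \<partial>M) / measure M A"
  proof (rule integral_cond_meas[OF A_sets])
    show "(\<lambda>p. f (q (fst p), snd p)) \<in> borel_measurable M"
      using measurable_compose[OF qp f] by (subst measurable_cong_sets[OF M refl])
  qed
  also have "(\<lambda>p. indicator A p * f (q (fst p), snd p)) = (\<lambda>p. indicator B (fst p) * f (q (fst p), snd p))"
    by (auto simp: A_def fun_eq_iff split: split_indicator)
  finally show ?thesis
    unfolding A_def .
qed

lemma integral_perspective_test:
  assumes "\<And>x. x \<in> B \<Longrightarrow> inner_d d w x \<noteq> 0"
  shows "(\<integral>p. (if fst p \<in> B \<and> persp d w (fst p) \<in> S then 1 / inner_d d w (fst p) else 0)
             * snd p * inner_d d w (fst p) \<partial>M)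
       = (\<integral>p. indicator B (fst p) * (indicator S (persp d w (fst p)) * snd p) \<partial>M)"
  using assms by (intro Bochner_Integration.integral_cong) (auto simp: indicator_def)

lemma perspective_test_correlation_le:
  assumes M: "prob_space M" "sets M = sets borel"
    and wb: "well_behaved TYPE(3) d (distr M borel fst) L R \<beta>"
    and d: "3 \<le> d" and w: "w \<in> Rd d" "inner_d d w w = 1"
    and L: "0 < L" and R: "0 < R" and \<rho>: "0 < \<rho>" "\<rho> \<le> 1" and C': "0 < C'"
    and B_def: "B = {x. \<rho> * R / 2 \<le> inner_d d x w \<and> inner_d d x w \<le> \<rho> * R / sqrt 2}"
    and S: "S \<in> sets borel"
    and corr: "(\<integral>p. indicator S (fst p) * snd p \<partial>cond_push M B (persp d w)) < - C'"
  shows "(\<integral>p. (if fst p \<in> B \<and> persp d w (fst p) \<in> S then 1 / inner_d d w (fst p) else 0)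
             * snd p * inner_d d w (fst p) \<partial>M) \<le> - (1/5) * C' * L * R ^ 3 * \<rho>"
proof -
  interpret prob_space M by (rule M(1))
  define P where "P = measure M {p. fst p \<in> B}"
  have B: "B \<in> sets borel"
    unfolding B_def by measurable
  have fst_M: "fst \<in> borel_measurable M"
    using borel_measurable_fst by (subst measurable_cong_sets[OF M(2) refl])
  have "measure (distr M borel fst) B = measure M (fst -` B \<inter> space M)"
    by (rule measure_distr[OF fst_M B])
  also have "fst -` B \<inter> space M = {p. fst p \<in> B}"
    using sets_eq_imp_space_eq[OF M(2)] by auto
  finally have "measure (distr M borel fst) B = P"
    unfolding P_def .
  then have P_ge: "L * R ^ 3 * \<rho> / 5 \<le> P"
    using measure_slab_ge[OF wb finite_measure_distr[OF fst_M] _ d w L R \<rho>] unfolding B_def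
    by simp
  moreover have "0 < L * R ^ 3 * \<rho> / 5"
    using L R \<rho> by simp
  ultimately have "0 < P"
    by linarith
  have "inner_d d w x \<noteq> 0" if "x \<in> B" for x
  proof -
    have "0 < \<rho> * R / 2"
      using R \<rho> by simp
    also have "\<dots> \<le> inner_d d w x"
      using that unfolding B_def by (simp add: inner_d_commute[of d x])
    finally show ?thesis
      by simp
  qed
  then have "(\<integral>p. (if fst p \<in> B \<and> persp d w (fst p) \<in> S then 1 / inner_d d w (fst p) else 0)
             * snd p * inner_d d w (fst p) \<partial>M)
      = (\<integral>p. indicator B (fst p) * (indicator S (persp d w (fst p)) * snd p) \<partial>M)"
    by (rule integral_perspective_test)
  also have "\<dots> = P * (\<integral>p. indicator S (fst p) * snd p \<partial>cond_push M B (persp d w))"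
  proof -
    have "(\<lambda>p::(nat \<Rightarrow> real) \<times> real. indicator S (fst p) * snd p) \<in> borel_measurable borel"
      using S by measurable
    then show ?thesis
      using integral_cond_push[OF M(2) B borel_measurable_persp] \<open>0 < P\<close> unfolding P_def
      by simp
  qed
  also have "\<dots> \<le> P * - C'"
    using \<open>0 < P\<close> corr by (intro mult_left_mono) simp_all
  also have "\<dots> \<le> - (1/5) * C' * L * R ^ 3 * \<rho>"
    using P_ge C' by (simp add: algebra_simps)
  finally show ?thesis .
qed

theorem mainTheorem8:
  shows "\<exists>c0>0. \<forall>(d::nat) (M::((nat \<Rightarrow> real) \<times> real) measure) (L::real) (R::real) (\<beta>::real)
           (w::nat \<Rightarrow> real) (\<rho>::real) (v::nat \<Rightarrow> real) (t1::real) (t2::real) (C'::real).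
    (3 \<le> d \<and> prob_space M \<and> sets M = sets borel \<and>
    (AE p in M. fst p \<in> Rd d) \<and> (AE p in M. snd p \<in> {-1, 1}) \<and>
    0 < L \<and> 0 < R \<and> 1 \<le> \<beta> \<and>
    well_behaved TYPE(3) d (distr M borel fst) L R \<beta> \<and>
    w \<in> Rd d \<and> inner_d d w w = 1 \<and> 0 < \<rho> \<and> \<rho> \<le> 1 \<and>
    v \<in> Rd d \<and> inner_d d v w = 0 \<and> 0 < t1 \<and> 0 < t2 \<and> 0 < C') \<longrightarrow>
    (let B = {x. \<rho> * R / 2 \<le> inner_d d x w \<and> inner_d d x w \<le> \<rho> * R / sqrt 2};
         S = {z. - t1 \<le> inner_d d v z \<and> inner_d d v z \<le> - t2};
         T = (\<lambda>x. if x \<in> B \<and> persp d w x \<in> S then 1 / inner_d d w x else 0)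
     in (\<integral>p. indicator S (fst p) * snd p \<partial>(cond_push M B (persp d w))) < - C'
        \<longrightarrow> (\<integral>p. T (fst p) * snd p * inner_d d w (fst p) \<partial>M) \<le> - c0 * C' * L * R ^ 3 * \<rho>)"
  unfolding Let_def
  by (intro exI[of _ "1/5"] conjI allI impI, simp, elim conjE)
    (rule perspective_test_correlation_le; (assumption | rule refl | measurable))

end
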